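(* For $n=0,1,2,\ldots$ let $R_n=\sum_{k=0}^n\binom{n}{k}\binom{n+k}{k}\frac{1}{2k-1}$. The sequence $\{R_n\}_{n=4}^\infty$ is strictly log-convex; equivalently, the sequence $\{R_{n+1}/R_n\}_{n=3}^\infty$ is strictly increasing.
   Context: A sequence $\{z_n\}$ of positive numbers is strictly log-convex if $z_{n-1}z_{n+1}>z_n^2$ for all indices $n$ for which $z_{n-1},z_n,z_{n+1}$ belong to the sequence. *)

theory Defs
  imports Complex_Main
begin

definition R :: "nat \<Rightarrow> real" where
  "R n = (\<Sum>k=0..n. real (n choose k) * real ((n + k) choose k) / (2 * real k - 1))"

definition strictly_log_convex_from :: "nat \<Rightarrow> (nat \<Rightarrow> real) \<Rightarrow> bool" where
  "strictly_log_convex_from m z \<longleftrightarrow>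
     (\<forall>n\<ge>m. z n > 0) \<and> (\<forall>n\<ge>m + 1. z (n - 1) * z (n + 1) > (z n)^2)"

end

theory Submission
  imports Defs
begin

text \<open>
  Zeilberger's algorithm gives the recurrence
  (n+3) R(n+3) = (7n+13) R(n+2) - (7n+15) R(n+1) + (n+1) R(n),
  which is verified through an explicit telescoping certificate. Hence the second differences U
  of R satisfy (n+4) U(n+2) = (6n+15) U(n+1) - (n+1) U(n), and by induction the quadratic form
  (n+4) y^2 - (6n+15) y x + (n+1) x^2 stays negative along (U(n+1), U(n)); this makes U
  positive, increasing and strictly log-convex. If a sequence z has positive log-convex
  differences a and z(m+1) a(m) < z(m) a(m+1), then z is strictly log-convex from m on,
  because z(n) z(n+2) - z(n+1)^2 = z(n) a(n+1) - z(n+1) a(n) and this quantity stays positive.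
  Applying this to the first differences of R (from n = 1) and then to R (from n = 3) gives
  the theorem.
\<close>

text \<open>The summand of R with its upper index turned into a real variable, so that the index
  shifts in the recurrence become shifts of x.\<close>

definition R_term :: "real \<Rightarrow> nat \<Rightarrow> real" where
  "R_term x k = pochhammer (x - k + 1) (2*k) / ((fact k)^2 * (2 * real k - 1))"

lemma real_binomial_pochhammer: "real (m choose k) = pochhammer (real m - k + 1) k / fact k"
  by (simp add: binomial_gbinomial gbinomial_pochhammer')

lemma R_term_of_nat:
  "real (m choose k) * real ((m + k) choose k) / (2 * real k - 1) = R_term (real m) k"
proof -
  have "real ((m + k) choose k) = pochhammer (real m + 1) k / fact k"
    using real_binomial_pochhammer[of "m + k" k] by simp
  moreover have "pochhammer (real m - k + 1) k * pochhammer (real m + 1) k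
      = pochhammer (real m - k + 1) (2*k)"
    using pochhammer_product'[of "real m - k + 1" k k] by (simp add: mult_2)
  ultimately show ?thesis
    unfolding R_term_def real_binomial_pochhammer[of m k] by (simp add: power2_eq_square)
qed

lemma pochhammer_add3:
  "pochhammer (z::'a::comm_semiring_1) (p + q + r)
     = pochhammer z p * pochhammer (z + of_nat p) q * pochhammer (z + of_nat p + of_nat q) r"
  by (simp add: pochhammer_product' add.assoc mult.assoc)

lemma R_term_shift:
  fixes x :: real
  assumes "i \<le> 3"
  shows "R_term (x + i) (j + 2) = pochhammer (x - j - 1 + i) (3 - i)
           * pochhammer (x - j + 2) (2*j + 1) * pochhammer (x + j + 3) i
           / ((fact (j + 2))^2 * (2 * real j + 3))"
proof -
  have "2 * (j + 2) = (3 - i) + (2*j + 1) + i" using assms by simp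
  then have "pochhammer (x + i - (j + 2) + 1) (2 * (j + 2))
      = pochhammer (x - j - 1 + i) ((3 - i) + (2*j + 1) + i)"
    by (simp only:) (simp add: algebra_simps)
  also have "\<dots> = pochhammer (x - j - 1 + i) (3 - i)
           * pochhammer (x - j + 2) (2*j + 1) * pochhammer (x + j + 3) i"
    unfolding pochhammer_add3 using assms by (simp add: of_nat_diff algebra_simps)
  finally have "pochhammer (x + i - (j + 2) + 1) (2 * (j + 2)) = \<dots>" .
  then show ?thesis unfolding R_term_def by (simp add: algebra_simps)
qed

lemma R_term_certificate:
  fixes x :: real
  shows "(x + 1) * R_term x (j + 2) - (7*x + 15) * R_term (x + 1) (j + 2)
       + (7*x + 13) * R_term (x + 2) (j + 2) - (x + 3) * R_term (x + 3) (j + 2)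
     = 4 * pochhammer (x - j + 1) (j + 2) * pochhammer (x + 2) (j + 2) / (fact (j + 2))^2
       - 4 * pochhammer (x - j + 2) (j + 1) * pochhammer (x + 2) (j + 1) / (fact (j + 1))^2"
proof -
  define a where "a = x - j - 1"
  define b where "b = x + j + 3"
  define P where "P = pochhammer (x - j + 2) (j + 1)"
  define Q where "Q = pochhammer (x + 3) j"
  define F :: real where "F = fact (j + 1)"
  define E where "E = real j + 2"
  have F: "F > 0" and E: "E > 0" by (simp_all add: F_def E_def)
  define D where "D = E^2 * F^2 * (2 * real j + 3)"
  have "2*j + 1 = (j + 1) + j" by simp
  then have M: "pochhammer (x - j + 2) (2*j + 1) = P * Q"
    unfolding P_def Q_def by (simp only: pochhammer_product') (simp add: algebra_simps)
  have denominator: "(fact (j + 2))^2 * (2 * real j + 3) = D"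
    by (simp add: D_def E_def F_def algebra_simps power2_eq_square)
  have P': "pochhammer (x - j + 1) (j + 2) = (a + 2) * P"
    by (simp add: a_def P_def pochhammer_rec algebra_simps)
  have Q1: "pochhammer (x + 2) (j + 1) = (x + 2) * Q"
    by (simp add: Q_def pochhammer_rec algebra_simps)
  have Q2: "pochhammer (x + 2) (j + 2) = (x + 2) * Q * b"
    using Q1 by (simp add: b_def pochhammer_Suc algebra_simps)
  have f: "fact (j + 2) = E * F"
    by (simp add: E_def F_def algebra_simps)
  have R_term_shifted:
    "R_term (x + i) (j + 2) = pochhammer (a + i) (3 - i) * pochhammer b i * (P * Q) / D"
    if "i \<le> 3" for i
    unfolding R_term_shift[OF that] M denominator a_def b_def by (simp only: ac_simps)
  have "(x + 1) * R_term x (j + 2) - (7*x + 15) * R_term (x + 1) (j + 2)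
       + (7*x + 13) * R_term (x + 2) (j + 2) - (x + 3) * R_term (x + 3) (j + 2)
     = ((x + 1) * (a * (a + 1) * (a + 2)) - (7*x + 15) * ((a + 1) * (a + 2) * b)
       + (7*x + 13) * ((a + 2) * b * (b + 1)) - (x + 3) * (b * (b + 1) * (b + 2))) * (P * Q) / D"
    using R_term_shifted[of 0] R_term_shifted[of 1] R_term_shifted[of 2] R_term_shifted[of 3]
    by (simp add: pochhammer_Suc numeral_3_eq_3 numeral_2_eq_2
        diff_divide_distrib add_divide_distrib algebra_simps)
  also have "\<dots> = (2 * real j + 3) * (4 * (x + 2) * ((a + 2) * b - E^2)) * (P * Q) / D"
    unfolding a_def b_def E_def by algebra
  also have "\<dots> = 4 * (x + 2) * ((a + 2) * b - E^2) * (P * Q) / (E * F)^2"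
    by (simp add: D_def power_mult_distrib)
  also have "\<dots> = 4 * ((a + 2) * P) * ((x + 2) * Q * b) / (E * F)^2
      - 4 * P * ((x + 2) * Q) / F^2"
    using F E by (simp add: power_mult_distrib field_simps)
  also have "\<dots> = 4 * pochhammer (x - j + 1) (j + 2) * pochhammer (x + 2) (j + 2)
         / (fact (j + 2))^2
       - 4 * pochhammer (x - j + 2) (j + 1) * pochhammer (x + 2) (j + 1) / (fact (j + 1))^2"
    by (simp only: P' Q1 Q2 f F_def P_def)
  finally show ?thesis .
qed

text \<open>At x = n this is 4 C(n+2, k-1) C(n+k, k-1), the certificate produced by Zeilberger's
  algorithm.\<close>

definition R_cert :: "real \<Rightarrow> nat \<Rightarrow> real" where
  "R_cert x k = (case k of 0 \<Rightarrow> 0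
     | Suc i \<Rightarrow> 4 * pochhammer (x - i + 3) i * pochhammer (x + 2) i / (fact i)^2)"

lemma R_term_telescoping:
  fixes x :: real
  shows "(x + 1) * R_term x k - (7*x + 15) * R_term (x + 1) k
       + (7*x + 13) * R_term (x + 2) k - (x + 3) * R_term (x + 3) k
     = R_cert x (Suc k) - R_cert x k"
proof (cases k)
  case 0
  then show ?thesis by (simp add: R_term_def R_cert_def)
next
  case (Suc i)
  show ?thesis
  proof (cases i)
    case 0
    with \<open>k = Suc i\<close> show ?thesis
      by (simp add: R_term_def R_cert_def numeral_2_eq_2 pochhammer_Suc
          algebra_simps power2_eq_square)
  next
    case (Suc j)
    with \<open>k = Suc i\<close> have "k = j + 2" by simp
    then show ?thesis
      using R_term_certificate[of x j] by (simp add: R_cert_def algebra_simps numeral_3_eq_3)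
  qed
qed

lemma R_cert_vanishes: "R_cert (real n) (n + 4) = 0"
  by (simp add: R_cert_def numeral_eq_Suc pochhammer_0_left)

lemma R_term_vanishes: "m < k \<Longrightarrow> R_term (real m) k = 0"
  by (simp add: R_term_of_nat[symmetric] binomial_eq_0)

lemma R_eq_sum_R_term:
  assumes "m < N"
  shows "R m = (\<Sum>k<N. R_term (real m) k)"
proof -
  have "R m = (\<Sum>k<m + 1. R_term (real m) k)"
    unfolding R_def R_term_of_nat by (rule sum.cong) auto
  also have "\<dots> = (\<Sum>k<N. R_term (real m) k)"
    by (rule sum.mono_neutral_left) (use assms R_term_vanishes in auto)
  finally show ?thesis .
qed

lemma R_recurrence:
  "real (n + 3) * R (n + 3)
     = real (7*n + 13) * R (n + 2) - real (7*n + 15) * R (n + 1) + real (n + 1) * R n"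
proof -
  have R_shift: "R (n + i) = (\<Sum>k<n + 4. R_term (real n + i) k)" if "i \<le> 3" for i
    using R_eq_sum_R_term[of "n + i" "n + 4"] that by simp
  have "real (n + 1) * R n - real (7*n + 15) * R (n + 1)
      + real (7*n + 13) * R (n + 2) - real (n + 3) * R (n + 3)
      = (\<Sum>k<n + 4. (real n + 1) * R_term (real n) k - (7 * real n + 15) * R_term (real n + 1) k
          + (7 * real n + 13) * R_term (real n + 2) k - (real n + 3) * R_term (real n + 3) k)"
    using R_shift[of 0] R_shift[of 1] R_shift[of 2] R_shift[of 3]
    by (simp add: sum_distrib_left sum_subtractf sum.distrib add.commute)
  also have "\<dots> = (\<Sum>k<n + 4. R_cert (real n) (Suc k) - R_cert (real n) k)"
    by (simp only: R_term_telescoping)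
  also have "\<dots> = 0"
    unfolding sum_lessThan_telescope R_cert_vanishes by (simp add: R_cert_def)
  finally show ?thesis by simp
qed

lemma R_values: "R 0 = -1" "R 1 = 1" "R 2 = 7" "R 3 = 25" "R 4 = 87" "R 5 = 329"
proof -
  show R0: "R 0 = -1" and R1: "R 1 = 1" by (simp_all add: R_def)
  show R2: "R 2 = 7" by (simp add: R_def numeral_2_eq_2)
  show R3: "R 3 = 25" using R_recurrence[of 0] R0 R1 R2 by (simp add: numeral_2_eq_2)
  show R4: "R 4 = 87" using R_recurrence[of 1] R1 R2 R3 by (simp add: numeral_eq_Suc)
  show "R 5 = 329" using R_recurrence[of 2] R2 R3 R4 by (simp add: numeral_eq_Suc)
qed

definition forward_diff :: "(nat \<Rightarrow> real) \<Rightarrow> nat \<Rightarrow> real" where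
  "forward_diff z n = z (n + 1) - z n"

lemma log_convex_if_forward_diff_log_convex:
  fixes z :: "nat \<Rightarrow> real"
  defines "a \<equiv> forward_diff z"
  assumes a_pos: "\<And>n. n \<ge> m \<Longrightarrow> a n > 0"
    and a_log_convex: "\<And>n. n \<ge> m \<Longrightarrow> (a (n + 1))^2 \<le> a n * a (n + 2)"
    and z_pos: "z m > 0" and start: "z (m + 1) * a m < z m * a (m + 1)"
    and n: "n \<ge> m"
  shows "z n > 0 \<and> (z (n + 1))^2 < z n * z (n + 2)"
proof -
  have z_Suc: "z (n + 1) = z n + a n" for n by (simp add: a_def forward_diff_def)
  have gap: "z n * z (n + 2) - (z (n + 1))^2 = z n * a (n + 1) - z (n + 1) * a n" for n
    using z_Suc[of n] z_Suc[of "n + 1"] by (simp add: algebra_simps power2_eq_square)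
  have inv: "z n > 0 \<and> z (n + 1) * a n < z n * a (n + 1)" if "n \<ge> m" for n
    using that
  proof (induction n rule: dec_induct)
    case base
    then show ?case using z_pos start by simp
  next
    case (step n)
    have an: "a n > 0" "a (n + 1) > 0" using a_pos step.hyps(1) by auto
    have z1: "z (n + 1) > 0" using step.IH an z_Suc[of n] by simp
    have "z (n + 1) * (a (n + 1))^2 - z (n + 2) * a (n + 1) * a n
        = a (n + 1) * (z n * a (n + 1) - z (n + 1) * a n)"
      using z_Suc[of n] z_Suc[of "n + 1"] by (simp add: algebra_simps power2_eq_square)
    moreover have "a (n + 1) * (z n * a (n + 1) - z (n + 1) * a n) > 0"
      using step.IH an by simp
    ultimately have "z (n + 2) * a (n + 1) * a n < z (n + 1) * (a (n + 1))^2"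
      by linarith
    also have "\<dots> \<le> z (n + 1) * a (n + 2) * a n"
      using a_log_convex[OF step.hyps(1)] z1 by (simp add: mult.assoc mult.commute mult_left_mono)
    finally have "z (n + 2) * a (n + 1) < z (n + 1) * a (n + 2)"
      using an(1) by (simp add: mult_less_cancel_right_pos)
    then show ?case using z1 by (simp add: numeral_eq_Suc)
  qed
  show ?thesis
    using inv[OF n] gap[of n] by simp
qed

lemma R_diff2_recurrence:
  "(real n + 4) * forward_diff (forward_diff R) (n + 2)
     = (6 * real n + 15) * forward_diff (forward_diff R) (n + 1)
       - (real n + 1) * forward_diff (forward_diff R) n"
  using R_recurrence[of n] R_recurrence[of "n + 1"]
  by (simp add: forward_diff_def algebra_simps numeral_eq_Suc)

definition recurrence_form :: "real \<Rightarrow> real \<Rightarrow> real \<Rightarrow> real" where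
  "recurrence_form m y x = (m + 4) * y^2 - (6*m + 15) * y * x + (m + 1) * x^2"

text \<open>Through the recurrence the form at (z, y) equals (m+1) (y^2 - x z), so its negativity at
  (y, x) is inherited one step later.\<close>

lemma recurrence_form_step:
  fixes m x y z :: real
  assumes m: "m \<ge> 0" and rec: "(m + 4) * z = (6*m + 15) * y - (m + 1) * x"
    and x: "x > 0" and xy: "x \<le> y" and form: "recurrence_form m y x < 0"
  shows "y^2 < x * z" "y \<le> z" "recurrence_form (m + 1) z y < 0"
proof -
  have "(m + 4) * (x * z) = (m + 4) * y^2 - recurrence_form m y x"
    using arg_cong[OF rec, of "\<lambda>t. t * x"]
    unfolding recurrence_form_def by (simp add: algebra_simps power2_eq_square)
  then have "(m + 4) * y^2 < (m + 4) * (x * z)" using form by linarith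
  then show xz: "y^2 < x * z" using m by simp
  have y: "y > 0" using x xy by linarith
  have "x * y \<le> y^2" using xy y by (simp add: power2_eq_square)
  then have "x * y < x * z" using xz by linarith
  then show yz: "y \<le> z" using x by simp
  have "recurrence_form m z y = (m + 1) * (y^2 - x * z)"
    using arg_cong[OF rec, of "\<lambda>t. t * z"]
    unfolding recurrence_form_def by (simp add: algebra_simps power2_eq_square)
  then have neg: "recurrence_form m z y < 0"
    using xz m by (simp add: mult_pos_neg)
  have "z^2 - 6 * y * z + y^2 < 0"
  proof (rule ccontr)
    assume "\<not> ?thesis"
    then have "(m + 4) * (z^2 - 6 * y * z + y^2) \<ge> 0" using m by simp
    moreover have "3 * y * (3 * z - y) > 0" using y yz by simp
    moreover have "recurrence_form m z y
        = (m + 4) * (z^2 - 6 * y * z + y^2) + 3 * y * (3 * z - y)"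
      unfolding recurrence_form_def by (simp add: algebra_simps power2_eq_square)
    ultimately show False using neg by linarith
  qed
  moreover have "recurrence_form (m + 1) z y = recurrence_form m z y + (z^2 - 6 * y * z + y^2)"
    unfolding recurrence_form_def by (simp add: algebra_simps)
  ultimately show "recurrence_form (m + 1) z y < 0" using neg by linarith
qed

lemma R_diff_values:
  "forward_diff R 1 = 6" "forward_diff R 2 = 18" "forward_diff R 3 = 62" "forward_diff R 4 = 242"
  "forward_diff (forward_diff R) 0 = 4" "forward_diff (forward_diff R) 1 = 12"
  "forward_diff (forward_diff R) 2 = 44"
  using R_values by (simp_all add: forward_diff_def eval_nat_numeral)

lemma R_diff2_invariant:
  "forward_diff (forward_diff R) n > 0
   \<and> forward_diff (forward_diff R) n \<le> forward_diff (forward_diff R) (n + 1)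
   \<and> recurrence_form n (forward_diff (forward_diff R) (n + 1))
         (forward_diff (forward_diff R) n) < 0"
proof (induction n)
  case 0
  show ?case using R_diff_values(5,6) by (simp add: recurrence_form_def)
next
  case (Suc n)
  then show ?case
    using recurrence_form_step[OF _ R_diff2_recurrence]
    by (auto simp: add.commute)
qed

lemma R_diff2_pos_log_convex:
  "forward_diff (forward_diff R) n > 0
   \<and> (forward_diff (forward_diff R) (n + 1))^2
       < forward_diff (forward_diff R) n * forward_diff (forward_diff R) (n + 2)"
  using R_diff2_invariant[of n]
    recurrence_form_step(1)[OF _ R_diff2_recurrence]
  by simp

lemma R_diff_pos_log_convex:
  assumes "n \<ge> 1"
  shows "forward_diff R n > 0
    \<and> (forward_diff R (n + 1))^2 < forward_diff R n * forward_diff R (n + 2)"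
proof (rule log_convex_if_forward_diff_log_convex[OF _ _ _ _ assms])
  fix k
  show "forward_diff (forward_diff R) k > 0"
    and "(forward_diff (forward_diff R) (k + 1))^2
         \<le> forward_diff (forward_diff R) k * forward_diff (forward_diff R) (k + 2)"
    using R_diff2_pos_log_convex[of k] by auto
qed (use R_diff_values in \<open>simp_all add: eval_nat_numeral\<close>)

lemma R_pos_log_convex:
  assumes "n \<ge> 3"
  shows "R n > 0 \<and> (R (n + 1))^2 < R n * R (n + 2)"
proof (rule log_convex_if_forward_diff_log_convex[OF _ _ _ _ assms])
  fix k :: nat
  assume "k \<ge> 3"
  then show "forward_diff R k > 0"
    and "(forward_diff R (k + 1))^2 \<le> forward_diff R k * forward_diff R (k + 2)"
    using R_diff_pos_log_convex[of k] by auto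
qed (use R_values R_diff_values in \<open>simp_all add: eval_nat_numeral\<close>)

theorem theorem4p1:
  shows "strictly_log_convex_from 4 R \<and>
         (\<forall>n\<ge>3. R (n + 1) / R n < R (n + 2) / R (n + 1))"
proof -
  have "R (n - 1) * R (n + 1) > (R n)^2" if "n \<ge> 5" for n
    using R_pos_log_convex[of "n - 1"] that by (simp add: numeral_eq_Suc)
  moreover have "R (n + 1) / R n < R (n + 2) / R (n + 1)" if "n \<ge> 3" for n
    using R_pos_log_convex[of n] R_pos_log_convex[of "n + 1"] that
    by (simp add: divide_simps power2_eq_square mult.commute)
  ultimately show ?thesis
    unfolding strictly_log_convex_from_def using R_pos_log_convex by auto
qed

end
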